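(* Let $p$ be a prime, $d \geq 1$, $V = \mathbb{F}_p^d$, let $G \leq \mathrm{GL}(V)$ be an irreducible linear group on $V$, and let $\Delta \subseteq V$ be a $G$-invariant subset. If for some integer $m \geq 1$ the sumset $m \cdot \Delta$ contains a line $b + \mathbb{F}_p v = \{ b + \lambda v \mid \lambda \in \mathbb{F}_p\}$ for some $b \in V$ and nonzero $v \in V$, then $dm \cdot \Delta = V$.
   Context: For a subset $\Delta \subseteq V$ and a positive integer $n$, $n \cdot \Delta$ denotes the $n$-fold sumset $\{\delta_1 + \dots + \delta_n \mid \delta_1, \dots, \delta_n \in \Delta\}$. *)

theory Defs
  imports "HOL-Analysis.Analysis" "HOL-Computational_Algebra.Primes"
begin

text \<open>V = k^n where k is a finite field of prime order p (so k is F_p), and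
  d = CARD('n). Linear maps of V are matrices acting by *v.\<close>

definition nfold_sumset :: "nat \<Rightarrow> ('k::comm_monoid_add ^ 'n) set \<Rightarrow> ('k ^ 'n) set" where
  "nfold_sumset m D = {(\<Sum>i<m. f i) | f. \<forall>i<m. f i \<in> D}"

definition linear_group :: "('k::field ^ 'n ^ 'n) set \<Rightarrow> bool" where
  "linear_group G \<longleftrightarrow> mat 1 \<in> G \<and> (\<forall>A\<in>G. invertible A) \<and>
     (\<forall>A\<in>G. \<forall>B\<in>G. A ** B \<in> G) \<and> (\<forall>A\<in>G. matrix_inv A \<in> G)"

definition lin_subspace :: "('k::field ^ 'n) set \<Rightarrow> bool" where
  "lin_subspace W \<longleftrightarrow> 0 \<in> W \<and> (\<forall>x\<in>W. \<forall>y\<in>W. x + y \<in> W) \<and> (\<forall>c. \<forall>x\<in>W. c *s x \<in> W)"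

definition G_invariant :: "('k::field ^ 'n ^ 'n) set \<Rightarrow> ('k ^ 'n) set \<Rightarrow> bool" where
  "G_invariant G S \<longleftrightarrow> (\<forall>A\<in>G. \<forall>x\<in>S. A *v x \<in> S)"

definition irreducible_linear_group :: "('k::field ^ 'n ^ 'n) set \<Rightarrow> bool" where
  "irreducible_linear_group G \<longleftrightarrow> linear_group G \<and>
     (\<forall>W. lin_subspace W \<and> G_invariant G W \<longrightarrow> W = {0} \<or> W = UNIV)"

end

theory Submission
  imports Defs
begin

text \<open>Since G is irreducible, the orbit of v spans V, so it contains a basis
  g_1 v, ..., g_d v. Every x \<in> V can then be written as
  x = \<Sum>_i g_i b + \<Sum>_i c_i g_i v = \<Sum>_i g_i (b + c_i v),
  and each summand g_i (b + c_i v) lies in g_i (m \<cdot> \<Delta>) \<subseteq> m \<cdot> \<Delta>.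
  Hence x \<in> dm \<cdot> \<Delta>.\<close>

lemma nfold_sumset_0: "0 \<in> nfold_sumset 0 D"
  unfolding nfold_sumset_def by auto

lemma nfold_sumset_add:
  assumes "a \<in> nfold_sumset m D" "c \<in> nfold_sumset k D"
  shows "a + c \<in> nfold_sumset (m + k) D"
proof -
  obtain f where f: "a = (\<Sum>i<m. f i)" "\<forall>i<m. f i \<in> D"
    using assms(1) unfolding nfold_sumset_def by auto
  obtain g where g: "c = (\<Sum>i<k. g i)" "\<forall>i<k. g i \<in> D"
    using assms(2) unfolding nfold_sumset_def by auto
  define h where "h i = (if i < m then f i else g (i - m))" for i
  have "(\<Sum>i<m + j. h i) = (\<Sum>i<m. h i) + (\<Sum>i<j. h (m + i))" for j
    by (induction j) (simp_all add: ac_simps)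
  then have "a + c = (\<Sum>i<m + k. h i)"
    unfolding h_def f g by simp
  moreover have "\<forall>i<m + k. h i \<in> D"
    using f g unfolding h_def by auto
  ultimately show ?thesis
    unfolding nfold_sumset_def by blast
qed

lemma nfold_sumset_sum:
  assumes "finite B" "\<And>w. w \<in> B \<Longrightarrow> h w \<in> nfold_sumset m D"
  shows "sum h B \<in> nfold_sumset (card B * m) D"
  using assms
proof (induction B rule: finite_induct)
  case empty
  then show ?case using nfold_sumset_0 by simp
next
  case (insert x F)
  then have "h x + sum h F \<in> nfold_sumset (m + card F * m) D"
    by (intro nfold_sumset_add) auto
  then show ?case using insert by simp
qed

lemma G_invariant_nfold_sumset:
  assumes "G_invariant G D"
  shows "G_invariant G (nfold_sumset m D)"
  unfolding G_invariant_def
proof (intro ballI)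
  fix A x assume "A \<in> G" "x \<in> nfold_sumset m D"
  then obtain f where f: "x = (\<Sum>i<m. f i)" "\<forall>i<m. f i \<in> D"
    unfolding nfold_sumset_def by auto
  have "A *v x = (\<Sum>i<m. A *v f i)"
    unfolding f by (simp add: vec.sum)
  moreover have "\<forall>i<m. A *v f i \<in> D"
    using f assms \<open>A \<in> G\<close> unfolding G_invariant_def by auto
  ultimately show "A *v x \<in> nfold_sumset m D"
    unfolding nfold_sumset_def by blast
qed

lemma lin_subspace_span: "lin_subspace (vec.span S)"
  unfolding lin_subspace_def by (auto intro: vec.span_zero vec.span_add vec.span_scale)

lemma G_invariant_span:
  fixes G :: "('k::field ^ 'n ^ 'n) set"
  assumes "G_invariant G S"
  shows "G_invariant G (vec.span S)"
  unfolding G_invariant_def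
proof (intro ballI)
  fix A x assume "A \<in> G" "x \<in> vec.span S"
  then have "A *v x \<in> vec.span ((*v) A ` S)"
    by (simp add: vec.span_image)
  moreover have "(*v) A ` S \<subseteq> S"
    using assms \<open>A \<in> G\<close> unfolding G_invariant_def by auto
  ultimately show "A *v x \<in> vec.span S"
    using vec.span_mono by blast
qed

lemma G_invariant_orbit:
  assumes "linear_group G"
  shows "G_invariant G ((\<lambda>A. A *v v) ` G)"
  using assms unfolding G_invariant_def linear_group_def
  by (auto simp: matrix_vector_mul_assoc)

lemma irreducible_orbit_span_eq_UNIV:
  assumes G: "irreducible_linear_group G" and "v \<noteq> 0"
  shows "vec.span ((\<lambda>A. A *v v) ` G) = UNIV"
proof -
  have lg: "linear_group G"
    using G unfolding irreducible_linear_group_def by auto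
  then have "v \<in> (\<lambda>A. A *v v) ` G"
    unfolding linear_group_def by (metis image_eqI matrix_vector_mul_lid)
  then have "v \<in> vec.span ((\<lambda>A. A *v v) ` G)"
    by (rule vec.span_base)
  moreover have "vec.span ((\<lambda>A. A *v v) ` G) = {0} \<or> vec.span ((\<lambda>A. A *v v) ` G) = UNIV"
    using G lin_subspace_span G_invariant_span[OF G_invariant_orbit[OF lg, where v = v]]
    unfolding irreducible_linear_group_def by blast
  ultimately show ?thesis
    using \<open>v \<noteq> 0\<close> by auto
qed

lemma spanning_set_contains_basis:
  fixes S :: "('k::field ^ 'n) set"
  assumes "vec.span S = UNIV"
  obtains B where "B \<subseteq> S" "finite B" "card B = CARD('n)" "vec.span B = UNIV"
proof -
  obtain B where B: "B \<subseteq> S" "vec.independent B" "S \<subseteq> vec.span B"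
    using vec.maximal_independent_subset by blast
  have "vec.span B = UNIV"
    using assms B(3) by (metis top.extremum_uniqueI vec.span_minimal vec.subspace_span)
  moreover have "card B = CARD('n)"
    using vec.basis_card_eq_dim[of B UNIV] B(2) \<open>vec.span B = UNIV\<close> vec.dim_UNIV card_cart_basis
    by auto
  ultimately show thesis
    using that[OF B(1) vec.finiteI_independent[OF B(2)]] by simp
qed

lemma sum_of_line_images_eq:
  fixes g :: "'k::field ^ 'n \<Rightarrow> 'k ^ 'n ^ 'n"
  assumes "finite B" "vec.span B = UNIV" "\<And>w. w \<in> B \<Longrightarrow> g w *v v = w"
  obtains c where "x = (\<Sum>w\<in>B. g w *v (b + c w *s v))"
proof -
  have "x - (\<Sum>w\<in>B. g w *v b) \<in> vec.span B"
    using assms(2) by auto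
  then obtain c where c: "x - (\<Sum>w\<in>B. g w *v b) = (\<Sum>w\<in>B. c w *s w)"
    unfolding vec.span_finite[OF assms(1)] by auto
  have "x = (\<Sum>w\<in>B. g w *v b) + (\<Sum>w\<in>B. c w *s (g w *v v))"
    using c assms(3) by (simp add: algebra_simps)
  also have "\<dots> = (\<Sum>w\<in>B. g w *v (b + c w *s v))"
    by (simp add: sum.distrib matrix_vector_right_distrib vector_scalar_commute)
  finally show thesis by (rule that)
qed

theorem lemma2p1:
  fixes G :: "('k::{field,finite} ^ 'n ^ 'n) set"
    and \<Delta> :: "('k ^ 'n) set"
    and m :: nat and b v :: "'k ^ 'n"
  assumes "prime CARD('k)"
    and "irreducible_linear_group G"
    and "G_invariant G \<Delta>"
    and "m \<ge> 1"
    and "v \<noteq> 0"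
    and "{b + c *s v | c. True} \<subseteq> nfold_sumset m \<Delta>"
  shows "nfold_sumset (CARD('n) * m) \<Delta> = UNIV"
proof -
  obtain B where B: "B \<subseteq> (\<lambda>A. A *v v) ` G" "finite B" "card B = CARD('n)" "vec.span B = UNIV"
    by (rule spanning_set_contains_basis[OF irreducible_orbit_span_eq_UNIV[OF assms(2,5)]])
  then have "\<forall>w\<in>B. \<exists>A\<in>G. A *v v = w"
    by auto
  then obtain g where g: "\<And>w. w \<in> B \<Longrightarrow> g w \<in> G \<and> g w *v v = w"
    by metis
  have "x \<in> nfold_sumset (CARD('n) * m) \<Delta>" for x
  proof -
    have "\<And>w. w \<in> B \<Longrightarrow> g w *v v = w"
      using g by simp
    then obtain c where x: "x = (\<Sum>w\<in>B. g w *v (b + c w *s v))"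
      using sum_of_line_images_eq[OF B(2,4)] by blast
    have "g w *v (b + c w *s v) \<in> nfold_sumset m \<Delta>" if "w \<in> B" for w
    proof -
      have "b + c w *s v \<in> nfold_sumset m \<Delta>"
        using assms(6) by auto
      then show ?thesis
        using G_invariant_nfold_sumset[OF assms(3)] g[OF that]
        unfolding G_invariant_def by simp
    qed
    then show ?thesis
      unfolding x B(3)[symmetric] by (rule nfold_sumset_sum[OF B(2)])
  qed
  then show ?thesis by blast
qed

end
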